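(* Let $\omega>0$ with $\omega\neq 2n\pi$ for all integers $n\ge1$. Let $r\ge1$ and let $f\colon[0,1]\times[-r,r]\to[0,+\infty)$ be continuous and such that $f(t,u)>0$ whenever $0\le t\le 1$ and $2\omega^{-1}|\sin(\tfrac12\omega)|\le|u|\le r$. Then for every $p\in[1,+\infty)$ there exists a parameter $\lambda=\lambda(\omega,p)>0$ such that the periodic boundary value problem $x''(t)+\omega^2x(t)=\lambda f(t,x(t))$, $t\in[0,1]$, $x(0)=x(1)$, $x'(0)=x'(1)$, has a solution $x\colon[0,1]\to[-r,r]$ with $\bigl(\int_0^1|x(t)|^p\,dt\bigr)^{1/p}=2\omega^{-1}|\sin(\tfrac12\omega)|$.
   Context: A solution of the boundary value problem is a twice continuously differentiable function $x\colon[0,1]\to\mathbb R$ satisfying the differential equation on $[0,1]$ and the two periodic boundary conditions. *)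

theory Defs
  imports "HOL-Analysis.Analysis"
begin

definition is_periodic_bvp_solution ::
  "real \<Rightarrow> real \<Rightarrow> (real \<Rightarrow> real \<Rightarrow> real) \<Rightarrow> (real \<Rightarrow> real) \<Rightarrow> bool" where
  "is_periodic_bvp_solution w lam f x \<longleftrightarrow>
     (\<exists>x' x''.
        (\<forall>t\<in>{0..1}. (x has_real_derivative x' t) (at t within {0..1})) \<and>
        (\<forall>t\<in>{0..1}. (x' has_real_derivative x'' t) (at t within {0..1})) \<and>
        continuous_on {0..1} x'' \<and>
        (\<forall>t\<in>{0..1}. x'' t + w\<^sup>2 * x t = lam * f t (x t)) \<and>
        x 0 = x 1 \<and> x' 0 = x' 1)"

end

theory Submission
  imports Defs "HOL-Homology.Homology" "HOL-Complex_Analysis.Great_Picard"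
begin

text \<open>Write rho = 2 |sin(w/2)| / w. Since w is not a multiple of 2 pi, the linear problem
  x'' + w^2 x = h with periodic boundary conditions has a unique solution U h, given by a Green's
  function of size at most |kappa| = 1 / (2 w |sin(w/2)|), and integrating the equation gives
  integral U h = integral h / w^2. For h \<ge> 0 this yields, via Jensen's inequality,
  |U h| \<le> |kappa| w^2 ||U h||_p, so the normalised map T x = rho U h_x / ||U h_x||_p takes values in
  [-1, 1] and has L^p norm rho, where h_x is f(t, x(t)) shifted upwards, if necessary, to have
  integral at least c0 > 0. T is equi-Lipschitz, so a Schauder-type argument (Brouwer's theorem
  on piecewise linear approximations plus Arzela-Ascoli) gives a fixed point y. As
  ||y||_p = rho, |y| reaches rho somewhere, f is positive there and, by uniform continuity, on a
  neighbourhood of fixed size; choosing c0 below the resulting lower bound makes the shift vanish,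
  so x = lambda U h_y = y solves the problem with lambda = rho / ||U h_y||_p.\<close>

section \<open>Brouwer's fixed point theorem for finitely supported sequences\<close>

definition fin_norm :: "nat \<Rightarrow> (nat \<Rightarrow> real) \<Rightarrow> real" where
  "fin_norm m v = sqrt (\<Sum>i\<le>m. (v i)\<^sup>2)"

definition fin_cball :: "nat \<Rightarrow> (nat \<Rightarrow> real) set" where
  "fin_cball m = {x. (\<forall>i>m. x i = 0) \<and> (\<Sum>i\<le>m. (x i)\<^sup>2) \<le> 1}"

definition fin_sphere :: "nat \<Rightarrow> (nat \<Rightarrow> real) set" where
  "fin_sphere m = {x. (\<forall>i>m. x i = 0) \<and> (\<Sum>i\<le>m. (x i)\<^sup>2) = 1}"

lemma nsphere_eq_fin_sphere: "nsphere m = top_of_set (fin_sphere m)"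
  by (simp add: nsphere fin_sphere_def euclidean_product_topology conj_commute)

lemma fin_sphere_subset_cball: "fin_sphere m \<subseteq> fin_cball m"
  unfolding fin_sphere_def fin_cball_def by auto

lemma fin_norm_squared: "(fin_norm m v)\<^sup>2 = (\<Sum>i\<le>m. (v i)\<^sup>2)"
  unfolding fin_norm_def by (simp add: sum_nonneg)

lemma fin_norm_sphere: "x \<in> fin_sphere m \<Longrightarrow> fin_norm m x = 1"
  unfolding fin_sphere_def fin_norm_def by simp

lemma fin_norm_pos:
  assumes "i \<le> m" "v i \<noteq> 0"
  shows "fin_norm m v > 0"
proof -
  have "0 < (v i)\<^sup>2" using assms by simp
  also have "\<dots> \<le> (\<Sum>i\<le>m. (v i)\<^sup>2)"
    using assms by (intro member_le_sum) auto
  finally show ?thesis unfolding fin_norm_def by simp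
qed

lemma fin_normalize_in_sphere:
  assumes "fin_norm m v > 0" "\<forall>i>m. v i = 0"
  shows "(\<lambda>i. v i / fin_norm m v) \<in> fin_sphere m"
proof -
  have "(\<Sum>i\<le>m. (v i / fin_norm m v)\<^sup>2) = (\<Sum>i\<le>m. (v i)\<^sup>2) / (fin_norm m v)\<^sup>2"
    by (simp add: power_divide sum_divide_distrib)
  also have "\<dots> = 1"
    using assms by (simp add: fin_norm_squared[symmetric])
  finally show ?thesis using assms unfolding fin_sphere_def by simp
qed

lemma continuous_on_fin_norm [continuous_intros]:
  fixes k :: "'a::topological_space \<Rightarrow> nat \<Rightarrow> real"
  assumes "continuous_on S k"
  shows "continuous_on S (\<lambda>x. fin_norm m (k x))"
  unfolding fin_norm_def
  by (intro continuous_intros) (rule continuous_on_product_then_coordinatewise[OF assms])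

lemma continuous_on_fin_normalize:
  fixes k :: "'a::topological_space \<Rightarrow> nat \<Rightarrow> real"
  assumes "continuous_on S k" "\<And>x. x \<in> S \<Longrightarrow> fin_norm m (k x) > 0"
  shows "continuous_on S (\<lambda>x i. k x i / fin_norm m (k x))"
proof (rule continuous_on_coordinatewise_then_product)
  fix i
  show "continuous_on S (\<lambda>x. k x i / fin_norm m (k x))"
    using assms(2) continuous_on_product_then_coordinatewise[OF assms(1)]
    by (intro continuous_on_divide continuous_on_fin_norm assms(1)) force+
qed

text \<open>The normalised straight-line homotopy from x to h x is well defined because
  x \<bullet> h x > 0.\<close>

lemma nsphere_homotopic_id_if_inner_pos:
  assumes cont: "continuous_on (fin_sphere m) h" and into: "h ` fin_sphere m \<subseteq> fin_sphere m"
    and pos: "\<And>x. x \<in> fin_sphere m \<Longrightarrow> (\<Sum>i\<le>m. x i * h x i) > 0"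
  shows "homotopic_with (\<lambda>_. True) (nsphere m) (nsphere m) id h"
proof -
  define Q where "Q z = (\<lambda>i. (1 - fst z) * snd z i + fst z * h (snd z) i)"
    for z :: "real \<times> (nat \<Rightarrow> real)"
  have Q_pos: "fin_norm m (Q z) > 0" if z: "z \<in> {0..1} \<times> fin_sphere m" for z
  proof -
    have "(\<Sum>i\<le>m. snd z i * Q z i)
        = (1 - fst z) * (\<Sum>i\<le>m. (snd z i)\<^sup>2) + fst z * (\<Sum>i\<le>m. snd z i * h (snd z) i)"
      unfolding Q_def sum_distrib_left sum.distrib[symmetric]
      by (intro sum.cong) (auto simp: algebra_simps power2_eq_square)
    also have "\<dots> > 0"
      using z pos[of "snd z"] unfolding fin_sphere_def
      by (cases "fst z = 0") (auto intro: add_nonneg_pos)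
    finally have "\<exists>i\<le>m. Q z i \<noteq> 0"
      by (metis (no_types, lifting) mult_zero_right order_less_irrefl sum.neutral atMost_iff)
    then show ?thesis using fin_norm_pos by blast
  qed
  have Q_cont: "continuous_on ({0..1} \<times> fin_sphere m) Q"
    unfolding Q_def
  proof (intro continuous_on_coordinatewise_then_product continuous_intros)
    fix i
    show "continuous_on ({0..1} \<times> fin_sphere m) (\<lambda>z. snd z i)"
      by (rule continuous_on_product_then_coordinatewise[OF continuous_on_snd[OF continuous_on_id]])
    have "continuous_on ({0..1} \<times> fin_sphere m) (\<lambda>z. h (snd z))"
      by (rule continuous_on_compose2[OF cont continuous_on_snd[OF continuous_on_id]]) auto
    then show "continuous_on ({0..1} \<times> fin_sphere m) (\<lambda>z. h (snd z) i)"
      by (rule continuous_on_product_then_coordinatewise)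
  qed
  have Q_zero: "\<forall>i>m. Q z i = 0" if "z \<in> {0..1} \<times> fin_sphere m" for z
  proof -
    have "snd z \<in> fin_sphere m" "h (snd z) \<in> fin_sphere m" using that into by auto
    then show ?thesis unfolding Q_def fin_sphere_def by simp
  qed
  show ?thesis
  proof (subst homotopic_with, simp, intro exI conjI)
    let ?H = "\<lambda>z i. Q z i / fin_norm m (Q z)"
    show "continuous_map (prod_topology (top_of_set {0..1}) (nsphere m)) (nsphere m) ?H"
      unfolding nsphere_eq_fin_sphere prod_topology_subtopology_eu continuous_map_subtopology_eu
      using continuous_on_fin_normalize[OF Q_cont Q_pos] fin_normalize_in_sphere Q_pos Q_zero
      by blast
    show "\<forall>x\<in>topspace (nsphere m). ?H (0, x) = id x"
      unfolding nsphere_eq_fin_sphere by (auto simp: Q_def fin_norm_sphere)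
    show "\<forall>x\<in>topspace (nsphere m). ?H (1, x) = h x"
      unfolding nsphere_eq_fin_sphere using into by (auto simp: Q_def fin_norm_sphere)
  qed simp
qed

lemma nsphere_nullhomotopic_if_extends:
  assumes cont: "continuous_on (fin_cball m) h" and into: "h ` fin_cball m \<subseteq> fin_sphere m"
  shows "homotopic_with (\<lambda>_. True) (nsphere m) (nsphere m) h (\<lambda>_. h (\<lambda>i. 0))"
proof (subst homotopic_with, simp, intro exI conjI)
  let ?H = "\<lambda>z. h (\<lambda>i. (1 - fst z) * snd z i)"
  have in_cball: "(\<lambda>i. (1 - fst z) * snd z i) \<in> fin_cball m"
    if z: "z \<in> {0..1} \<times> fin_sphere m" for z :: "real \<times> (nat \<Rightarrow> real)"
  proof -
    have "(\<Sum>i\<le>m. ((1 - fst z) * snd z i)\<^sup>2) = (1 - fst z)\<^sup>2 * (\<Sum>i\<le>m. (snd z i)\<^sup>2)"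
      by (simp add: power_mult_distrib sum_distrib_left)
    also have "\<dots> \<le> 1" using z unfolding fin_sphere_def by (auto simp: power_le_one)
    finally show ?thesis using z unfolding fin_cball_def fin_sphere_def by auto
  qed
  show "continuous_map (prod_topology (top_of_set {0..1}) (nsphere m)) (nsphere m) ?H"
    unfolding nsphere_eq_fin_sphere prod_topology_subtopology_eu continuous_map_subtopology_eu
  proof
    have "continuous_on ({0..1} \<times> fin_sphere m) (\<lambda>z i. (1 - fst z) * snd z i)"
      by (intro continuous_on_coordinatewise_then_product continuous_intros)
        (rule continuous_on_product_then_coordinatewise[OF continuous_on_snd[OF continuous_on_id]])
    then show "continuous_on ({0..1} \<times> fin_sphere m) ?H"
      by (rule continuous_on_compose2[OF cont]) (use in_cball in auto)
    show "?H \<in> {0..1} \<times> fin_sphere m \<rightarrow> fin_sphere m" using in_cball into by auto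
  qed
  show "\<forall>x\<in>topspace (nsphere m). ?H (0, x) = h x" by simp
  show "\<forall>x\<in>topspace (nsphere m). ?H (1, x) = h (\<lambda>i. 0)" by simp
qed simp

lemma fin_sphere_inner_diff_ge:
  assumes x: "x \<in> fin_sphere m" and y: "y \<in> fin_cball m"
  shows "(\<Sum>i\<le>m. (x i - y i)\<^sup>2) \<le> 2 * (\<Sum>i\<le>m. x i * (x i - y i))"
proof -
  have "(\<Sum>i\<le>m. (x i - y i)\<^sup>2) = (\<Sum>i\<le>m. (x i)\<^sup>2) - 2 * (\<Sum>i\<le>m. x i * y i) + (\<Sum>i\<le>m. (y i)\<^sup>2)"
    by (simp add: power2_diff sum.distrib sum_subtractf sum_distrib_left algebra_simps)
  moreover have "(\<Sum>i\<le>m. x i * (x i - y i)) = (\<Sum>i\<le>m. (x i)\<^sup>2) - (\<Sum>i\<le>m. x i * y i)"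
    by (simp add: sum_subtractf algebra_simps power2_eq_square)
  moreover have "(\<Sum>i\<le>m. (x i)\<^sup>2) = 1" "(\<Sum>i\<le>m. (y i)\<^sup>2) \<le> 1"
    using x y unfolding fin_sphere_def fin_cball_def by auto
  ultimately show ?thesis by linarith
qed

theorem brouwer_fin_cball:
  assumes cont: "continuous_on (fin_cball m) g" and into: "g ` fin_cball m \<subseteq> fin_cball m"
  shows "\<exists>x\<in>fin_cball m. g x = x"
proof (rule ccontr)
  assume no_fix: "\<not> (\<exists>x\<in>fin_cball m. g x = x)"
  define d where "d x = (\<lambda>i. x i - g x i)" for x
  define h where "h x = (\<lambda>i. d x i / fin_norm m (d x))" for x
  have d_pos: "fin_norm m (d x) > 0" if x: "x \<in> fin_cball m" for x
  proof -
    have "g x \<noteq> x" using no_fix x by auto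
    moreover have "g x i = x i" if "i > m" for i
      using x into that unfolding fin_cball_def by auto
    ultimately obtain i where "i \<le> m" "d x i \<noteq> 0"
      unfolding d_def by (metis eq_iff_diff_eq_0 ext not_le)
    then show ?thesis by (rule fin_norm_pos)
  qed
  have d_zero: "\<forall>i>m. d x i = 0" if "x \<in> fin_cball m" for x
    using that into unfolding d_def fin_cball_def by auto
  have "continuous_on (fin_cball m) d"
    unfolding d_def
    by (intro continuous_on_coordinatewise_then_product continuous_intros
        continuous_on_product_then_coordinatewise[OF cont])
      (auto intro: continuous_on_subset[OF continuous_on_product_coordinates])
  then have h_cont: "continuous_on (fin_cball m) h"
    unfolding h_def using d_pos by (rule continuous_on_fin_normalize)
  have h_into: "h ` fin_cball m \<subseteq> fin_sphere m"
    unfolding h_def using fin_normalize_in_sphere d_pos d_zero by blast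
  have h_inner: "(\<Sum>i\<le>m. x i * h x i) > 0" if x: "x \<in> fin_sphere m" for x
  proof -
    have xb: "x \<in> fin_cball m" using x fin_sphere_subset_cball by blast
    have "0 < (fin_norm m (d x))\<^sup>2" using d_pos[OF xb] by simp
    also have "\<dots> \<le> 2 * (\<Sum>i\<le>m. x i * d x i)"
      unfolding fin_norm_squared d_def using xb into by (intro fin_sphere_inner_diff_ge[OF x]) blast
    finally have "(\<Sum>i\<le>m. x i * d x i) > 0" by simp
    moreover have "(\<Sum>i\<le>m. x i * h x i) = (\<Sum>i\<le>m. x i * d x i) / fin_norm m (d x)"
      unfolding h_def by (simp add: sum_divide_distrib)
    ultimately show ?thesis using d_pos[OF xb] by simp
  qed
  have "h ` fin_sphere m \<subseteq> fin_sphere m"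
    using h_into fin_sphere_subset_cball by blast
  then have "homotopic_with (\<lambda>_. True) (nsphere m) (nsphere m) id h"
    using nsphere_homotopic_id_if_inner_pos continuous_on_subset[OF h_cont fin_sphere_subset_cball]
      h_inner by blast
  then have "homotopic_with (\<lambda>_. True) (nsphere m) (nsphere m) id (\<lambda>_. h (\<lambda>i. 0))"
    using homotopic_with_trans nsphere_nullhomotopic_if_extends[OF h_cont h_into] by blast
  then have "contractible_space (nsphere m)"
    unfolding contractible_space_def by blast
  then show False using non_contractible_space_nsphere by blast
qed

corollary brouwer_fin_cube:
  fixes g :: "(nat \<Rightarrow> real) \<Rightarrow> nat \<Rightarrow> real"
  assumes cont: "continuous_on UNIV g"
    and bounded: "\<And>x i. i \<le> m \<Longrightarrow> \<bar>g x i\<bar> \<le> 1"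
    and zero: "\<And>x i. i > m \<Longrightarrow> g x i = 0"
  shows "\<exists>x. g x = x"
proof -
  define R :: real where "R = real m + 1"
  have R: "R \<ge> 1" unfolding R_def by simp
  define g' where "g' y = (\<lambda>i. g (\<lambda>j. R * y j) i / R)" for y
  have "continuous_on UNIV (\<lambda>y j. R * y j)"
    by (intro continuous_on_coordinatewise_then_product continuous_intros
        continuous_on_product_then_coordinatewise[OF continuous_on_id])
  then have "continuous_on UNIV (\<lambda>y. g (\<lambda>j. R * y j))"
    using continuous_on_compose2[OF cont] by blast
  then have "continuous_on (fin_cball m) (\<lambda>y. g (\<lambda>j. R * y j) i)" for i
    by (rule continuous_on_subset[OF continuous_on_product_then_coordinatewise]) simp
  then have "continuous_on (fin_cball m) g'"
    unfolding g'_def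
    by (intro continuous_on_coordinatewise_then_product continuous_intros) (use R in auto)
  moreover have "g' y \<in> fin_cball m" for y
  proof -
    have "(\<Sum>i\<le>m. (g' y i)\<^sup>2) \<le> (\<Sum>i\<le>m. 1 / R\<^sup>2)"
    proof (rule sum_mono)
      fix i assume "i \<in> {..m}"
      then have "(g (\<lambda>j. R * y j) i)\<^sup>2 \<le> 1"
        using bounded by (simp add: abs_le_square_iff[of _ 1, simplified])
      then show "(g' y i)\<^sup>2 \<le> 1 / R\<^sup>2"
        unfolding g'_def by (simp add: power_divide divide_right_mono)
    qed
    also have "\<dots> = 1 / R" unfolding R_def by (simp add: power2_eq_square add.commute)
    also have "\<dots> \<le> 1" using R by simp
    finally show ?thesis unfolding fin_cball_def g'_def using zero by auto
  qed
  ultimately obtain y where "g' y = y"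
    using brouwer_fin_cball[of m g'] by blast
  then have "g (\<lambda>j. R * y j) = (\<lambda>j. R * y j)"
    using R unfolding g'_def by (auto simp: fun_eq_iff field_simps dest: fun_cong)
  then show ?thesis by blast
qed

section \<open>A Schauder-type fixed point theorem in C[0,1]\<close>

lemma tendsto_fun_iff:
  "(f \<longlongrightarrow> (l :: nat \<Rightarrow> real)) F \<longleftrightarrow> (\<forall>i. ((\<lambda>c. f c i) \<longlongrightarrow> l i) F)"
  using limitin_componentwise[of "\<lambda>i. euclidean" UNIV f l F] by (simp add: euclidean_product_topology)

text \<open>Piecewise linear interpolation on the grid i / N; the denominator is 1 on [0,1], but
  dividing by it saves proving that.\<close>

definition hat :: "nat \<Rightarrow> nat \<Rightarrow> real \<Rightarrow> real" where
  "hat N i t = max 0 (1 - \<bar>real N * t - real i\<bar>)"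

definition interp :: "nat \<Rightarrow> (nat \<Rightarrow> real) \<Rightarrow> real \<Rightarrow> real" where
  "interp N v t = (\<Sum>i\<le>N. hat N i t * v i) / (\<Sum>i\<le>N. hat N i t)"

lemma hat_nonneg: "hat N i t \<ge> 0"
  unfolding hat_def by simp

lemma sum_hat_pos:
  assumes t: "t \<in> {0..1}"
  shows "(\<Sum>i\<le>N. hat N i t) > 0"
proof -
  define i0 where "i0 = nat \<lfloor>real N * t\<rfloor>"
  have Nt: "0 \<le> real N * t" "real N * t \<le> real N"
    using t by (auto simp: mult_left_le)
  then have i0: "real i0 \<le> real N * t" "real N * t < real i0 + 1"
    unfolding i0_def by linarith+
  then have "i0 \<le> N" using Nt by linarith
  moreover have "hat N i0 t > 0" unfolding hat_def using i0 by auto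
  ultimately have "0 < hat N i0 t" "hat N i0 t \<le> (\<Sum>i\<le>N. hat N i t)"
    by (auto intro: member_le_sum hat_nonneg)
  then show ?thesis by linarith
qed

lemma continuous_on_hat [continuous_intros]: "continuous_on S (hat N i)"
  unfolding hat_def by (intro continuous_intros)

lemma continuous_on_interp: "continuous_on {0..1} (interp N v)"
  unfolding interp_def by (intro continuous_intros) (use sum_hat_pos in \<open>metis less_irrefl\<close>)

lemma interp_tendsto:
  assumes "\<And>i. (\<lambda>n. u n i) \<longlonglongrightarrow> v i" and "s \<in> {0..1}"
  shows "(\<lambda>n. interp N (u n) s) \<longlonglongrightarrow> interp N v s"
  unfolding interp_def using assms sum_hat_pos[of s N] by (intro tendsto_intros) auto

lemma interp_approx:
  assumes N: "N > 0" and L: "L \<ge> 0"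
    and nodes: "\<And>i. i \<le> N \<Longrightarrow> v i = f (real i / real N)"
    and lip: "\<And>t t'. t \<in> {0..1} \<Longrightarrow> t' \<in> {0..1} \<Longrightarrow> \<bar>f t - f t'\<bar> \<le> L * \<bar>t - t'\<bar>"
    and t: "t \<in> {0..1}"
  shows "\<bar>interp N v t - f t\<bar> \<le> L / real N"
proof -
  define S where "S = (\<Sum>i\<le>N. hat N i t)"
  have S: "S > 0" unfolding S_def by (rule sum_hat_pos[OF t])
  have "interp N v t - f t = (\<Sum>i\<le>N. hat N i t * (f (real i / real N) - f t)) / S"
    using S unfolding interp_def S_def
    by (simp add: nodes field_simps sum_subtractf sum_distrib_left sum_distrib_right right_diff_distrib)
  moreover have "hat N i t * \<bar>f (real i / real N) - f t\<bar> \<le> hat N i t * (L / real N)" if "i \<le> N" for i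
  proof (cases "hat N i t = 0")
    case False
    then have "\<bar>real N * t - real i\<bar> < 1" unfolding hat_def by (auto simp: max_def split: if_splits)
    then have "\<bar>real i / real N - t\<bar> \<le> 1 / real N"
      using N by (simp add: field_simps abs_minus_commute)
    moreover have "real i / real N \<in> {0..1}" using that N by auto
    ultimately have "\<bar>f (real i / real N) - f t\<bar> \<le> L * (1 / real N)"
      using lip[of "real i / real N" t] t L by (meson mult_left_mono order_trans)
    then show ?thesis by (intro mult_left_mono) (auto simp: hat_nonneg)
  qed simp
  then have "\<bar>\<Sum>i\<le>N. hat N i t * (f (real i / real N) - f t)\<bar> \<le> S * (L / real N)"
    unfolding S_def sum_distrib_right
    by (intro order_trans[OF sum_abs] sum_mono) (auto simp: abs_mult hat_nonneg)
  ultimately show ?thesis using S by (simp add: divide_le_eq mult.commute)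
qed

lemma approximate_fixpoint:
  fixes T :: "(real \<Rightarrow> real) \<Rightarrow> real \<Rightarrow> real"
  assumes bound: "\<And>x t. continuous_on {0..1} x \<Longrightarrow> t \<in> {0..1} \<Longrightarrow> \<bar>T x t\<bar> \<le> 1"
    and lip: "\<And>x t t'. continuous_on {0..1} x \<Longrightarrow> t \<in> {0..1} \<Longrightarrow> t' \<in> {0..1} \<Longrightarrow>
      \<bar>T x t - T x t'\<bar> \<le> L * \<bar>t - t'\<bar>"
    and tendsto: "\<And>xk x t. (\<And>k. continuous_on {0..1} (xk k)) \<Longrightarrow> continuous_on {0..1} x \<Longrightarrow>
      (\<And>s. s \<in> {0..1} \<Longrightarrow> (\<lambda>k. xk k s) \<longlonglongrightarrow> x s) \<Longrightarrow> t \<in> {0..1} \<Longrightarrow>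
      (\<lambda>k. T (xk k) t) \<longlonglongrightarrow> T x t"
    and L: "L \<ge> 0" and N: "N > 0"
  shows "\<exists>z. continuous_on {0..1} z \<and> (\<forall>t\<in>{0..1}. \<bar>z t - T z t\<bar> \<le> L / real N)"
proof -
  have node: "real i / real N \<in> {0..1}" if "i \<le> N" for i using that N by auto
  define g where "g v = (\<lambda>i. if i \<le> N then T (interp N v) (real i / real N) else 0)" for v
  have "continuous_on UNIV g"
  proof (rule continuous_on_sequentiallyI)
    fix u :: "nat \<Rightarrow> nat \<Rightarrow> real" and a assume "u \<longlonglongrightarrow> a"
    then have "(\<lambda>n. interp N (u n) s) \<longlonglongrightarrow> interp N a s" if "s \<in> {0..1}" for s
      using interp_tendsto that tendsto_fun_iff by blast
    then show "(\<lambda>n. g (u n)) \<longlonglongrightarrow> g a"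
      unfolding tendsto_fun_iff g_def
      by (auto intro: tendsto continuous_on_interp node)
  qed
  moreover have "\<bar>g v i\<bar> \<le> 1" if "i \<le> N" for v i
    using that bound[OF continuous_on_interp node] unfolding g_def by simp
  moreover have "g v i = 0" if "i > N" for v i
    using that unfolding g_def by simp
  ultimately obtain v where v: "g v = v"
    using brouwer_fin_cube by blast
  define z where "z = interp N v"
  have "v i = T z (real i / real N)" if "i \<le> N" for i
    using fun_cong[OF v, of i] that unfolding g_def z_def by simp
  then have "\<bar>z t - T z t\<bar> \<le> L / real N" if "t \<in> {0..1}" for t
    unfolding z_def
    using N L lip[OF continuous_on_interp] that by (intro interp_approx) auto
  then show ?thesis using continuous_on_interp unfolding z_def by blast
qed

lemma lipschitz_sequence_convergent_subseq:
  fixes Y :: "nat \<Rightarrow> real \<Rightarrow> real"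
  assumes bound: "\<And>n t. t \<in> {0..1} \<Longrightarrow> \<bar>Y n t\<bar> \<le> 1"
    and lip: "\<And>n t t'. t \<in> {0..1} \<Longrightarrow> t' \<in> {0..1} \<Longrightarrow> \<bar>Y n t - Y n t'\<bar> \<le> L * \<bar>t - t'\<bar>"
    and L: "L \<ge> 0"
  obtains g r where "continuous_on {0..1} g" "strict_mono r"
    "\<And>t. t \<in> {0..1} \<Longrightarrow> (\<lambda>n. Y (r n) t) \<longlonglongrightarrow> g t"
proof -
  obtain g r where g: "continuous_on {0..1} g" and r: "strict_mono (r :: nat \<Rightarrow> nat)"
    and unif: "\<And>e. 0 < e \<Longrightarrow> \<exists>N. \<forall>n t. n \<ge> N \<and> t \<in> {0..1} \<longrightarrow> norm (Y (r n) t - g t) < e"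
  proof (rule Arzela_Ascoli[of "{0..1::real}" Y 1])
    show "\<exists>d>0. \<forall>n t'. t' \<in> {0..1} \<and> norm (t - t') < d \<longrightarrow> norm (Y n t - Y n t') < e"
      if "t \<in> {0..1}" "0 < e" for t e
    proof (intro exI conjI allI impI)
      show "e / (L + 1) > 0" using that L by simp
      fix n t' assume t': "t' \<in> {0..1} \<and> norm (t - t') < e / (L + 1)"
      have "\<bar>Y n t - Y n t'\<bar> \<le> L * \<bar>t - t'\<bar>" using lip that(1) t' by blast
      also have "\<dots> \<le> L * (e / (L + 1))" using t' L by (intro mult_left_mono) auto
      also have "\<dots> < e" using L that(2) by (simp add: field_simps)
      finally show "norm (Y n t - Y n t') < e" by simp
    qed
  qed (use bound in auto)
  have "(\<lambda>n. Y (r n) t) \<longlonglongrightarrow> g t" if "t \<in> {0..1}" for t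
    using unif that by (intro LIMSEQ_I) blast
  then show thesis using that g r by blast
qed

text \<open>A Schauder-type fixed point theorem: the image of T is a bounded, uniformly Lipschitz,
  hence relatively compact family; Brouwer gives approximate fixed points on finer and finer
  grids and Arzela-Ascoli extracts a limit.\<close>

theorem fixpoint_of_bounded_lipschitz_operator:
  fixes T :: "(real \<Rightarrow> real) \<Rightarrow> real \<Rightarrow> real"
  assumes bound: "\<And>x t. continuous_on {0..1} x \<Longrightarrow> t \<in> {0..1} \<Longrightarrow> \<bar>T x t\<bar> \<le> 1"
    and lip: "\<And>x t t'. continuous_on {0..1} x \<Longrightarrow> t \<in> {0..1} \<Longrightarrow> t' \<in> {0..1} \<Longrightarrow>
      \<bar>T x t - T x t'\<bar> \<le> L * \<bar>t - t'\<bar>"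
    and tendsto: "\<And>xk x t. (\<And>k. continuous_on {0..1} (xk k)) \<Longrightarrow> continuous_on {0..1} x \<Longrightarrow>
      (\<And>s. s \<in> {0..1} \<Longrightarrow> (\<lambda>k. xk k s) \<longlonglongrightarrow> x s) \<Longrightarrow> t \<in> {0..1} \<Longrightarrow>
      (\<lambda>k. T (xk k) t) \<longlonglongrightarrow> T x t"
    and L: "L \<ge> 0"
  shows "\<exists>y. continuous_on {0..1} y \<and> (\<forall>t\<in>{0..1}. T y t = y t)"
proof -
  obtain z where z: "\<And>k. continuous_on {0..1} (z k)"
    and z_approx: "\<And>k t. t \<in> {0..1} \<Longrightarrow> \<bar>z k t - T (z k) t\<bar> \<le> L / real (Suc k)"
  proof -
    have "\<exists>z. continuous_on {0..1} z \<and> (\<forall>t\<in>{0..1}. \<bar>z t - T z t\<bar> \<le> L / real (Suc k))" for k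
      by (rule approximate_fixpoint[OF bound lip tendsto L zero_less_Suc])
    then show thesis using that by metis
  qed
  obtain y r where y: "continuous_on {0..1} y" and r: "strict_mono r"
    and Tz_lim: "\<And>t. t \<in> {0..1} \<Longrightarrow> (\<lambda>n. T (z (r n)) t) \<longlonglongrightarrow> y t"
    using lipschitz_sequence_convergent_subseq[of "\<lambda>k. T (z k)" L] bound[OF z] lip[OF z] L by metis
  have "(\<lambda>k. L / real (Suc k)) \<longlonglongrightarrow> 0"
    using tendsto_mult_right_zero[OF LIMSEQ_inverse_real_of_nat, of L] by (simp add: divide_inverse)
  then have err_lim: "(\<lambda>n. L / real (Suc (r n))) \<longlonglongrightarrow> 0"
    using LIMSEQ_subseq_LIMSEQ[OF _ r] by (simp add: o_def)
  have z_lim: "(\<lambda>n. z (r n) t) \<longlonglongrightarrow> y t" if t: "t \<in> {0..1}" for t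
  proof -
    have "(\<lambda>n. z (r n) t - T (z (r n)) t) \<longlonglongrightarrow> 0"
      using z_approx[OF t] by (intro Lim_null_comparison[OF _ err_lim] always_eventually) simp
    from tendsto_add[OF this Tz_lim[OF t]] show ?thesis by simp
  qed
  have "T y t = y t" if t: "t \<in> {0..1}" for t
    using tendsto[OF z y z_lim t] Tz_lim[OF t] by (rule LIMSEQ_unique)
  then show ?thesis using y by blast
qed

section \<open>Integrals and L^p norms on [0,1]\<close>

lemma tendsto_integral_bounded:
  fixes hk :: "nat \<Rightarrow> real \<Rightarrow> real"
  assumes cont: "\<And>k. continuous_on {a..b} (hk k)"
    and lim: "\<And>s. s \<in> {a..b} \<Longrightarrow> (\<lambda>k. hk k s) \<longlonglongrightarrow> h s"
    and bound: "\<And>k s. s \<in> {a..b} \<Longrightarrow> \<bar>hk k s\<bar> \<le> B"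
  shows "(\<lambda>k. integral {a..b} (hk k)) \<longlonglongrightarrow> integral {a..b} h"
  by (rule dominated_convergence(2)[where h="\<lambda>s. B"])
    (use cont lim bound in \<open>auto intro: integrable_continuous_interval\<close>)

lemma abs_integral_weighted_le:
  fixes \<phi> h :: "real \<Rightarrow> real"
  assumes "continuous_on {a..b} \<phi>" "continuous_on {a..b} h"
    and "\<And>s. s \<in> {a..b} \<Longrightarrow> h s \<ge> 0" "\<And>s. s \<in> {a..b} \<Longrightarrow> \<bar>\<phi> s\<bar> \<le> 1"
  shows "\<bar>integral {a..b} (\<lambda>s. \<phi> s * h s)\<bar> \<le> integral {a..b} h"
proof -
  have "norm (integral {a..b} (\<lambda>s. \<phi> s * h s)) \<le> integral {a..b} h"
    using assms
    by (intro Henstock_Kurzweil_Integration.integral_norm_bound_integral)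
      (auto intro!: integrable_continuous_interval continuous_intros mult_left_le_one_le simp: abs_mult)
  then show ?thesis by simp
qed

lemma abs_integral_split_weighted_le:
  fixes \<phi> \<psi> h :: "real \<Rightarrow> real"
  assumes "continuous_on {0..1} \<phi>" "continuous_on {0..1} \<psi>" "continuous_on {0..1} h"
    and "\<And>s. s \<in> {0..1} \<Longrightarrow> h s \<ge> 0"
    and "\<And>s. \<bar>\<phi> s\<bar> \<le> 1" "\<And>s. \<bar>\<psi> s\<bar> \<le> 1" and t: "t \<in> {0..1}"
  shows "\<bar>integral {0..t} (\<lambda>s. \<phi> s * h s) + integral {t..1} (\<lambda>s. \<psi> s * h s)\<bar>
    \<le> integral {0..1} h"
proof -
  have sub: "{0..t} \<subseteq> {0..1}" "{t..1} \<subseteq> {0..1}" using t by auto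
  have "\<bar>integral {0..t} (\<lambda>s. \<phi> s * h s)\<bar> \<le> integral {0..t} h"
    using assms sub(1) by (intro abs_integral_weighted_le) (auto elim: continuous_on_subset)
  moreover have "\<bar>integral {t..1} (\<lambda>s. \<psi> s * h s)\<bar> \<le> integral {t..1} h"
    using assms sub(2) by (intro abs_integral_weighted_le) (auto elim: continuous_on_subset)
  moreover have "integral {0..t} h + integral {t..1} h = integral {0..1} h"
    using t assms(3) by (intro Henstock_Kurzweil_Integration.integral_combine integrable_continuous_interval) auto
  ultimately show ?thesis by linarith
qed

definition Lp_norm :: "real \<Rightarrow> (real \<Rightarrow> real) \<Rightarrow> real" where
  "Lp_norm p u = (integral {0..1} (\<lambda>t. \<bar>u t\<bar> powr p)) powr (1 / p)"

lemma continuous_on_abs_powr: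
  fixes u :: "'a::topological_space \<Rightarrow> real"
  assumes "continuous_on S u" "p \<ge> 1"
  shows "continuous_on S (\<lambda>t. \<bar>u t\<bar> powr p)"
  using continuous_on_powr'[OF continuous_on_rabs[OF assms(1)] continuous_on_const] assms(2) by auto

lemma integrable_abs_powr:
  fixes u :: "real \<Rightarrow> real"
  assumes "continuous_on {a..b} u" "p \<ge> 1"
  shows "(\<lambda>t. \<bar>u t\<bar> powr p) integrable_on {a..b}"
  by (rule integrable_continuous_interval, rule continuous_on_abs_powr[OF assms])

lemma powr_above_tangent:
  fixes a y p :: real
  assumes a: "a > 0" and y: "y \<ge> 0" and p: "p \<ge> 1"
  shows "a powr p + p * a powr (p - 1) * (y - a) \<le> y powr p"
proof (cases "y = 0")
  case True
  have "a powr (p - 1) * a = a powr p" using a by (simp add: powr_diff)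
  moreover have "1 * a powr p \<le> p * a powr p" using p by (intro mult_right_mono) auto
  ultimately show ?thesis using True by (simp add: algebra_simps)
next
  case False
  have "(p * a powr (p - 1)) * (y - a) \<le> y powr p - a powr p"
  proof (rule convex_on_imp_above_tangent[OF powr_convex[OF p]])
    show "((\<lambda>x. x powr p) has_field_derivative p * a powr (p - 1)) (at a within {0<..})"
      using has_real_derivative_powr[OF a] by (rule has_field_derivative_at_within)
  qed (use a y False in \<open>auto simp: interior_open\<close>)
  then show ?thesis by simp
qed

text \<open>Jensen's inequality for the convex function x powr p, obtained by integrating the
  tangent line at the mean.\<close>

lemma powr_integral_abs_le:
  fixes u :: "real \<Rightarrow> real"
  assumes u: "continuous_on {0..1} u" and p: "p \<ge> 1"
  shows "(integral {0..1} (\<lambda>t. \<bar>u t\<bar>)) powr p \<le> integral {0..1} (\<lambda>t. \<bar>u t\<bar> powr p)"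
proof -
  define a where "a = integral {0..1} (\<lambda>t. \<bar>u t\<bar>)"
  have abs_int: "(\<lambda>t. \<bar>u t\<bar>) integrable_on {0..1}"
    by (intro integrable_continuous_interval continuous_intros u)
  have powr_int: "(\<lambda>t. \<bar>u t\<bar> powr p) integrable_on {0..1}"
    by (rule integrable_abs_powr[OF u p])
  show ?thesis
  proof (cases "a > 0")
    case False
    then have "a = 0" using integral_nonneg[OF abs_int] unfolding a_def by force
    then show ?thesis using powr_int unfolding a_def by (simp add: integral_nonneg)
  next
    case True
    have dev_int: "(\<lambda>t. \<bar>u t\<bar> - a) integrable_on {0..1}"
      using abs_int by (intro integrable_diff) auto
    have "integral {0..1} (\<lambda>t. \<bar>u t\<bar> - a) = 0"
      using Henstock_Kurzweil_Integration.integral_diff[OF abs_int integrable_const_ivl[of a 0 1]]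
      unfolding a_def by simp
    then have "integral {0..1} (\<lambda>t. p * a powr (p - 1) * (\<bar>u t\<bar> - a)) = 0"
      by simp
    then have "integral {0..1} (\<lambda>t. a powr p + p * a powr (p - 1) * (\<bar>u t\<bar> - a)) = a powr p"
      using Henstock_Kurzweil_Integration.integral_add[OF integrable_const_ivl[of "a powr p" 0 1]
          integrable_on_mult_right[OF dev_int, of "p * a powr (p - 1)"]]
      by simp
    moreover have "integral {0..1} (\<lambda>t. a powr p + p * a powr (p - 1) * (\<bar>u t\<bar> - a))
        \<le> integral {0..1} (\<lambda>t. \<bar>u t\<bar> powr p)"
      using True p
      by (intro Henstock_Kurzweil_Integration.integral_le[OF _ powr_int] integrable_continuous_interval
          continuous_intros powr_above_tangent u) auto
    ultimately show ?thesis unfolding a_def by simp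
  qed
qed

lemma integral_le_Lp_norm:
  assumes u: "continuous_on {0..1} u" and p: "p \<ge> 1"
  shows "integral {0..1} u \<le> Lp_norm p u"
proof -
  have abs_int: "(\<lambda>t. \<bar>u t\<bar>) integrable_on {0..1}"
    by (intro integrable_continuous_interval continuous_intros u)
  have "integral {0..1} u \<le> integral {0..1} (\<lambda>t. \<bar>u t\<bar>)"
    by (intro Henstock_Kurzweil_Integration.integral_le[OF _ abs_int] integrable_continuous_interval u) auto
  also have "\<dots> = ((integral {0..1} (\<lambda>t. \<bar>u t\<bar>)) powr p) powr (1 / p)"
    using p abs_int by (simp add: powr_powr integral_nonneg)
  also have "\<dots> \<le> Lp_norm p u"
    unfolding Lp_norm_def using p abs_int
    by (intro powr_mono2 powr_integral_abs_le u) (auto simp: integral_nonneg)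
  finally show ?thesis .
qed

lemma Lp_norm_le:
  assumes u: "continuous_on {0..1} u" and p: "p \<ge> 1" and B: "B \<ge> 0"
    and bound: "\<And>t. t \<in> {0..1} \<Longrightarrow> \<bar>u t\<bar> \<le> B"
  shows "Lp_norm p u \<le> B"
proof -
  have "integral {0..1} (\<lambda>t. \<bar>u t\<bar> powr p) \<le> integral {0..1} (\<lambda>t::real. B powr p)"
    using bound p by (intro Henstock_Kurzweil_Integration.integral_le integrable_abs_powr u powr_mono2) auto
  then have "Lp_norm p u \<le> (B powr p) powr (1 / p)"
    unfolding Lp_norm_def using p
    by (intro powr_mono2) (auto intro: integral_nonneg integrable_abs_powr[OF u p])
  then show ?thesis using p B by (simp add: powr_powr)
qed

lemma Lp_norm_scale:
  assumes c: "c > 0" and p: "p \<ge> 1" and u: "continuous_on {0..1} u"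
  shows "Lp_norm p (\<lambda>t. c * u t) = c * Lp_norm p u"
proof -
  have "integral {0..1} (\<lambda>t. \<bar>u t\<bar> powr p) \<ge> 0"
    by (rule integral_nonneg[OF integrable_abs_powr[OF u p]]) simp
  then show ?thesis unfolding Lp_norm_def using c p
    by (simp add: abs_mult powr_mult powr_powr)
qed

lemma Lp_norm_cong: "(\<And>t. t \<in> {0..1} \<Longrightarrow> u t = v t) \<Longrightarrow> Lp_norm p u = Lp_norm p v"
  unfolding Lp_norm_def by (metis (no_types, lifting) integral_cong)

lemma Lp_norm_tendsto:
  assumes uk: "\<And>k. continuous_on {0..1} (uk k)" and lim: "\<And>s. s \<in> {0..1} \<Longrightarrow> (\<lambda>k. uk k s) \<longlonglongrightarrow> u s"
    and bound: "\<And>k s. s \<in> {0..1} \<Longrightarrow> \<bar>uk k s\<bar> \<le> B" and u: "continuous_on {0..1} u" and p: "p \<ge> 1"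
  shows "(\<lambda>k. Lp_norm p (uk k)) \<longlonglongrightarrow> Lp_norm p u"
proof -
  have "(\<lambda>k. integral {0..1} (\<lambda>t. \<bar>uk k t\<bar> powr p)) \<longlonglongrightarrow> integral {0..1} (\<lambda>t. \<bar>u t\<bar> powr p)"
    using bound lim p
    by (intro tendsto_integral_bounded[where B="B powr p"] continuous_on_abs_powr uk tendsto_intros)
      (auto intro: powr_mono2)
  then show ?thesis unfolding Lp_norm_def using p
    by (intro tendsto_intros) (auto intro!: always_eventually integral_nonneg integrable_abs_powr uk u)
qed

lemma exists_abs_ge_Lp_norm:
  assumes u: "continuous_on {0..1} u" and p: "p \<ge> 1"
  obtains t where "t \<in> {0..1}" "Lp_norm p u \<le> \<bar>u t\<bar>"
proof -
  obtain t where t: "t \<in> {0..1}" and max: "\<And>s. s \<in> {0..1} \<Longrightarrow> \<bar>u s\<bar> \<le> \<bar>u t\<bar>"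
    using continuous_attains_sup[of "{0..1::real}" "\<lambda>s. \<bar>u s\<bar>"] continuous_on_rabs[OF u] by auto
  then show thesis using that Lp_norm_le[OF u p _ max] by simp
qed

lemma integral_ge_on_subinterval:
  fixes g :: "real \<Rightarrow> real"
  assumes g: "continuous_on {0..1} g" and g_nonneg: "\<And>s. s \<in> {0..1} \<Longrightarrow> g s \<ge> 0"
    and ab: "0 \<le> a" "a \<le> b" "b \<le> 1" and ge: "\<And>s. s \<in> {a..b} \<Longrightarrow> g s \<ge> c"
  shows "integral {0..1} g \<ge> c * (b - a)"
proof -
  have sub: "{a..b} \<subseteq> {0..1}" using ab by auto
  have g_int: "g integrable_on {0..1}" using g by (rule integrable_continuous_interval)
  have "c * (b - a) = integral {a..b} (\<lambda>s. c)" using ab by simp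
  also have "\<dots> \<le> integral {a..b} g"
    using ge by (intro Henstock_Kurzweil_Integration.integral_le integrable_on_subinterval[OF g_int sub]) auto
  also have "\<dots> \<le> integral {0..1} g"
    using g_nonneg by (intro integral_subset_le[OF sub integrable_on_subinterval[OF g_int sub] g_int]) auto
  finally show ?thesis .
qed

lemma integral_ge_near_point:
  fixes g :: "real \<Rightarrow> real"
  assumes g: "continuous_on {0..1} g" and g_nonneg: "\<And>s. s \<in> {0..1} \<Longrightarrow> g s \<ge> 0"
    and t0: "t0 \<in> {0..1}" and d: "0 \<le> d" "d \<le> 1/2"
    and ge: "\<And>s. s \<in> {0..1} \<Longrightarrow> \<bar>s - t0\<bar> \<le> d \<Longrightarrow> g s \<ge> c"
  shows "integral {0..1} g \<ge> c * d"
proof (cases "t0 \<le> 1/2")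
  case True
  have "c * ((t0 + d) - t0) \<le> integral {0..1} g"
    by (rule integral_ge_on_subinterval[OF g g_nonneg]) (use True t0 d ge in auto)
  then show ?thesis by simp
next
  case False
  have "c * (t0 - (t0 - d)) \<le> integral {0..1} g"
    by (rule integral_ge_on_subinterval[OF g g_nonneg]) (use False t0 d ge in auto)
  then show ?thesis by simp
qed

section \<open>The linear periodic problem\<close>

locale nonresonant =
  fixes w :: real
  assumes w_pos: "w > 0" and sin_half_nonzero: "sin (w / 2) \<noteq> 0"
begin

definition kappa :: real where
  "kappa = 1 / (2 * w * sin (w / 2))"

definition cos_int :: "(real \<Rightarrow> real) \<Rightarrow> real \<Rightarrow> real" where
  "cos_int h t = integral {0..t} (\<lambda>s. cos (w * s) * h s)"

definition sin_int :: "(real \<Rightarrow> real) \<Rightarrow> real \<Rightarrow> real" where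
  "sin_int h t = integral {0..t} (\<lambda>s. sin (w * s) * h s)"

text \<open>The periodic solution of x'' + w^2 x = h. It is the integral of h against the Green's
  function kappa cos(w(t - s) - w/2) for s \<le> t and kappa cos(w(t - s) + w/2) for s \<ge> t
  (see per_sol_eq_green), expanded with the addition formulas into the moments cos_int and
  sin_int, which are easy to differentiate.\<close>

definition per_sol :: "(real \<Rightarrow> real) \<Rightarrow> real \<Rightarrow> real" where
  "per_sol h t = kappa * (cos (w*t - w/2) * cos_int h t + sin (w*t - w/2) * sin_int h t
     + cos (w*t + w/2) * (cos_int h 1 - cos_int h t) + sin (w*t + w/2) * (sin_int h 1 - sin_int h t))"

definition per_sol_deriv :: "(real \<Rightarrow> real) \<Rightarrow> real \<Rightarrow> real" where
  "per_sol_deriv h t = kappa * w * (- sin (w*t - w/2) * cos_int h t + cos (w*t - w/2) * sin_int h t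
     - sin (w*t + w/2) * (cos_int h 1 - cos_int h t) + cos (w*t + w/2) * (sin_int h 1 - sin_int h t))"

lemma kappa_nonzero: "kappa \<noteq> 0"
  unfolding kappa_def using w_pos sin_half_nonzero by simp

text \<open>The L^p norm prescribed by the theorem (rho_eq); normalising to it keeps the operator T of
  periodic_bvp_operator within [-1, 1] (abs_T_le_one).\<close>

definition rho :: real where
  "rho = 1 / (\<bar>kappa\<bar> * w\<^sup>2)"

lemma rho_pos: "rho > 0"
  unfolding rho_def using kappa_nonzero w_pos by simp

lemma rho_eq: "rho = 2 / w * \<bar>sin (w / 2)\<bar>"
  unfolding rho_def kappa_def using w_pos by (simp add: abs_mult power2_eq_square)

lemma has_derivative_cos_int:
  "continuous_on {0..1} h \<Longrightarrow> t \<in> {0..1} \<Longrightarrow>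
    (cos_int h has_real_derivative cos (w * t) * h t) (at t within {0..1})"
  unfolding cos_int_def[abs_def]
  by (rule integral_has_real_derivative) (auto intro!: continuous_intros)

lemma has_derivative_sin_int:
  "continuous_on {0..1} h \<Longrightarrow> t \<in> {0..1} \<Longrightarrow>
    (sin_int h has_real_derivative sin (w * t) * h t) (at t within {0..1})"
  unfolding sin_int_def[abs_def]
  by (rule integral_has_real_derivative) (auto intro!: continuous_intros)

lemma has_derivative_per_sol:
  assumes h: "continuous_on {0..1} h" and t: "t \<in> {0..1}"
  shows "(per_sol h has_real_derivative per_sol_deriv h t) (at t within {0..1})"
proof -
  define Z where "Z = cos (w*t - w/2) * cos (w*t) + sin (w*t - w/2) * sin (w*t)
    - (cos (w*t + w/2) * cos (w*t) + sin (w*t + w/2) * sin (w*t))"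
  have "Z = 0"
    using cos_diff[of "w*t - w/2" "w*t"] cos_diff[of "w*t + w/2" "w*t"] unfolding Z_def by simp
  moreover have "(per_sol h has_real_derivative per_sol_deriv h t + kappa * h t * Z) (at t within {0..1})"
    unfolding per_sol_def[abs_def]
    by (rule derivative_eq_intros has_derivative_cos_int[OF h t] has_derivative_sin_int[OF h t] refl)+
      (simp add: per_sol_deriv_def Z_def algebra_simps)
  ultimately show ?thesis by simp
qed

lemma has_derivative_per_sol_deriv:
  assumes h: "continuous_on {0..1} h" and t: "t \<in> {0..1}"
  shows "(per_sol_deriv h has_real_derivative h t - w\<^sup>2 * per_sol h t) (at t within {0..1})"
proof -
  define Z where "Z = - sin (w*t - w/2) * cos (w*t) + cos (w*t - w/2) * sin (w*t)
    + sin (w*t + w/2) * cos (w*t) - cos (w*t + w/2) * sin (w*t)"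
  have "Z = 2 * sin (w/2)"
    using sin_diff[of "w*t" "w*t - w/2"] sin_diff[of "w*t + w/2" "w*t"] unfolding Z_def
    by (simp add: algebra_simps)
  then have "kappa * w * Z = 1"
    unfolding kappa_def using w_pos sin_half_nonzero by simp
  moreover have "(per_sol_deriv h has_real_derivative
      kappa * w * Z * h t - w\<^sup>2 * per_sol h t) (at t within {0..1})"
    unfolding per_sol_deriv_def[abs_def]
    by (rule derivative_eq_intros has_derivative_cos_int[OF h t] has_derivative_sin_int[OF h t] refl)+
      (simp add: per_sol_def Z_def algebra_simps power2_eq_square)
  ultimately show ?thesis by simp
qed

lemma per_sol_periodic: "per_sol h 0 = per_sol h 1" "per_sol_deriv h 0 = per_sol_deriv h 1"
  unfolding per_sol_def per_sol_deriv_def cos_int_def sin_int_def by (simp_all add: algebra_simps)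

lemma continuous_on_per_sol: "continuous_on {0..1} h \<Longrightarrow> continuous_on {0..1} (per_sol h)"
  using has_derivative_per_sol DERIV_continuous continuous_on_eq_continuous_within by blast

lemma integral_cos_sin_combination:
  assumes "continuous_on {a..b} h"
  shows "integral {a..b} (\<lambda>s. (c * cos (w * s) + d * sin (w * s)) * h s)
    = c * integral {a..b} (\<lambda>s. cos (w * s) * h s) + d * integral {a..b} (\<lambda>s. sin (w * s) * h s)"
proof -
  have "(\<lambda>s. cos (w * s) * h s) integrable_on {a..b}" "(\<lambda>s. sin (w * s) * h s) integrable_on {a..b}"
    using assms by (auto intro!: integrable_continuous_interval continuous_intros)
  then show ?thesis
    by (simp add: distrib_right mult.assoc integral_add integrable_on_mult_right)
qed

lemma cos_int_diff:
  "continuous_on {0..1} h \<Longrightarrow> t \<in> {0..1} \<Longrightarrow>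
    cos_int h 1 - cos_int h t = integral {t..1} (\<lambda>s. cos (w * s) * h s)"
  unfolding cos_int_def
  by (subst Henstock_Kurzweil_Integration.integral_combine[symmetric, of 0 t 1])
    (auto intro!: integrable_continuous_interval continuous_intros)

lemma sin_int_diff:
  "continuous_on {0..1} h \<Longrightarrow> t \<in> {0..1} \<Longrightarrow>
    sin_int h 1 - sin_int h t = integral {t..1} (\<lambda>s. sin (w * s) * h s)"
  unfolding sin_int_def
  by (subst Henstock_Kurzweil_Integration.integral_combine[symmetric, of 0 t 1])
    (auto intro!: integrable_continuous_interval continuous_intros)

lemma per_sol_eq_green:
  assumes h: "continuous_on {0..1} h" and t: "t \<in> {0..1}"
  shows "per_sol h t = kappa * (integral {0..t} (\<lambda>s. cos (w * (t - s) - w/2) * h s)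
    + integral {t..1} (\<lambda>s. cos (w * (t - s) + w/2) * h s))"
proof -
  have "cos (w * (t - s) - w/2) = cos (w*t - w/2) * cos (w * s) + sin (w*t - w/2) * sin (w * s)"
    "cos (w * (t - s) + w/2) = cos (w*t + w/2) * cos (w * s) + sin (w*t + w/2) * sin (w * s)" for s
    using cos_diff[of "w*t - w/2" "w * s"] cos_diff[of "w*t + w/2" "w * s"] by (simp_all add: algebra_simps)
  moreover have "continuous_on {0..t} h" "continuous_on {t..1} h"
    using h t by (auto elim: continuous_on_subset)
  ultimately show ?thesis
    unfolding per_sol_def cos_int_diff[OF h t] sin_int_diff[OF h t]
    by (simp add: integral_cos_sin_combination cos_int_def sin_int_def)
qed

lemma per_sol_deriv_eq_green:
  assumes h: "continuous_on {0..1} h" and t: "t \<in> {0..1}"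
  shows "per_sol_deriv h t = kappa * w * (integral {0..t} (\<lambda>s. sin (w * (s - t) + w/2) * h s)
    + integral {t..1} (\<lambda>s. sin (w * (s - t) - w/2) * h s))"
proof -
  have "sin (w * (s - t) + w/2) = - sin (w*t - w/2) * cos (w * s) + cos (w*t - w/2) * sin (w * s)"
    "sin (w * (s - t) - w/2) = - sin (w*t + w/2) * cos (w * s) + cos (w*t + w/2) * sin (w * s)" for s
    using sin_diff[of "w * s" "w*t - w/2"] sin_diff[of "w * s" "w*t + w/2"] by (simp_all add: algebra_simps)
  moreover have "continuous_on {0..t} h" "continuous_on {t..1} h"
    using h t by (auto elim: continuous_on_subset)
  ultimately show ?thesis
    unfolding per_sol_deriv_def cos_int_diff[OF h t] sin_int_diff[OF h t]
    by (simp only: integral_cos_sin_combination cos_int_def sin_int_def) (simp add: algebra_simps)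
qed

lemma abs_per_sol_le:
  assumes "continuous_on {0..1} h" "\<And>s. s \<in> {0..1} \<Longrightarrow> h s \<ge> 0" "t \<in> {0..1}"
  shows "\<bar>per_sol h t\<bar> \<le> \<bar>kappa\<bar> * integral {0..1} h"
  unfolding per_sol_eq_green[OF assms(1,3)] abs_mult
  using assms by (intro mult_left_mono abs_integral_split_weighted_le) (auto intro!: continuous_intros)

lemma abs_per_sol_deriv_le:
  assumes "continuous_on {0..1} h" "\<And>s. s \<in> {0..1} \<Longrightarrow> h s \<ge> 0" "t \<in> {0..1}"
  shows "\<bar>per_sol_deriv h t\<bar> \<le> \<bar>kappa\<bar> * w * integral {0..1} h"
proof -
  have "\<bar>integral {0..t} (\<lambda>s. sin (w * (s - t) + w / 2) * h s)
      + integral {t..1} (\<lambda>s. sin (w * (s - t) - w / 2) * h s)\<bar> \<le> integral {0..1} h"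
    using assms by (intro abs_integral_split_weighted_le) (auto intro!: continuous_intros)
  then show ?thesis
    unfolding per_sol_deriv_eq_green[OF assms(1,3)] using w_pos by (simp add: abs_mult mult_left_mono)
qed

lemma per_sol_lipschitz:
  assumes "continuous_on {0..1} h" "\<And>s. s \<in> {0..1} \<Longrightarrow> h s \<ge> 0"
    and "t \<in> {0..1}" "t' \<in> {0..1}"
  shows "\<bar>per_sol h t - per_sol h t'\<bar> \<le> \<bar>kappa\<bar> * w * integral {0..1} h * \<bar>t - t'\<bar>"
  using field_differentiable_bound[of "{0..1}" "per_sol h" "per_sol_deriv h"]
    has_derivative_per_sol abs_per_sol_deriv_le assms by fastforce

lemma integral_per_sol:
  assumes h: "continuous_on {0..1} h"
  shows "integral {0..1} (per_sol h) = integral {0..1} h / w\<^sup>2"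
proof -
  have "((\<lambda>t. h t - w\<^sup>2 * per_sol h t) has_integral (per_sol_deriv h 1 - per_sol_deriv h 0)) {0..1}"
    using has_derivative_per_sol_deriv[OF h]
    by (intro fundamental_theorem_of_calculus) (auto simp: has_real_derivative_iff_has_vector_derivative)
  then have "integral {0..1} (\<lambda>t. h t - w\<^sup>2 * per_sol h t) = 0"
    using per_sol_periodic by (simp add: integral_unique)
  moreover have "integral {0..1} (\<lambda>t. h t - w\<^sup>2 * per_sol h t)
      = integral {0..1} h - w\<^sup>2 * integral {0..1} (per_sol h)"
    using integrable_continuous_interval[OF h] integrable_continuous_interval[OF continuous_on_per_sol[OF h]]
    by (simp add: Henstock_Kurzweil_Integration.integral_diff integrable_on_mult_right)
  ultimately show ?thesis using w_pos by (simp add: field_simps)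
qed

lemma per_sol_tendsto:
  assumes hk: "\<And>k. continuous_on {0..1} (hk k)" and h: "continuous_on {0..1} h"
    and lim: "\<And>s. s \<in> {0..1} \<Longrightarrow> (\<lambda>k. hk k s) \<longlonglongrightarrow> h s"
    and bound: "\<And>k s. s \<in> {0..1} \<Longrightarrow> \<bar>hk k s\<bar> \<le> B" and t: "t \<in> {0..1}"
  shows "(\<lambda>k. per_sol (hk k) t) \<longlonglongrightarrow> per_sol h t"
proof -
  have moments: "(\<lambda>k. cos_int (hk k) u) \<longlonglongrightarrow> cos_int h u" "(\<lambda>k. sin_int (hk k) u) \<longlonglongrightarrow> sin_int h u"
    if u: "u \<in> {0..1}" for u
  proof -
    have sub: "{0..u} \<subseteq> {0..1}" using u by auto
    have "\<bar>\<phi> * hk k s\<bar> \<le> B" if "\<bar>\<phi>\<bar> \<le> 1" "s \<in> {0..u}" for \<phi> k s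
      using mult_mono[OF that(1) bound[of s k]] that sub by (auto simp: abs_mult)
    then show "(\<lambda>k. cos_int (hk k) u) \<longlonglongrightarrow> cos_int h u" "(\<lambda>k. sin_int (hk k) u) \<longlonglongrightarrow> sin_int h u"
      unfolding cos_int_def sin_int_def using sub lim
      by (auto intro!: tendsto_integral_bounded[where B=B] tendsto_intros continuous_intros
          continuous_on_subset[OF hk sub])
  qed
  show ?thesis
    unfolding per_sol_def using moments[OF t] moments[of 1] by (intro tendsto_intros) auto
qed

end

section \<open>The fixed point operator\<close>

locale periodic_bvp_operator = nonresonant +
  fixes F :: "real \<Rightarrow> real \<Rightarrow> real" and M c0 p :: real
  assumes F_cont: "continuous_on ({0..1} \<times> UNIV) (\<lambda>(s, u). F s u)"
    and F_nonneg: "\<And>s u. s \<in> {0..1} \<Longrightarrow> F s u \<ge> 0"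
    and F_le: "\<And>s u. s \<in> {0..1} \<Longrightarrow> F s u \<le> M"
    and c0_pos: "c0 > 0" and p: "p \<ge> 1"
begin

lemma continuous_on_F_comp:
  assumes "continuous_on {0..1} x"
  shows "continuous_on {0..1} (\<lambda>s. F s (x s))"
proof -
  have "continuous_on {0..1} (\<lambda>s. (\<lambda>(s, u). F s u) (s, x s))"
    by (rule continuous_on_compose2[OF F_cont]) (auto intro: continuous_intros assms)
  then show ?thesis by simp
qed

lemma F_comp_tendsto:
  assumes "s \<in> {0..1}" "(\<lambda>k. xk k s) \<longlonglongrightarrow> x s"
  shows "(\<lambda>k. F s (xk k s)) \<longlonglongrightarrow> F s (x s)"
proof -
  have "continuous_on UNIV (\<lambda>u. (\<lambda>(s, u). F s u) (s, u))"
    by (rule continuous_on_compose2[OF F_cont]) (use assms(1) in \<open>auto intro: continuous_intros\<close>)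
  then have "isCont (F s) (x s)"
    by (simp add: continuous_on_eq_continuous_at)
  then show ?thesis by (rule isCont_tendsto_compose[OF _ assms(2)])
qed

definition F_int :: "(real \<Rightarrow> real) \<Rightarrow> real" where
  "F_int x = integral {0..1} (\<lambda>s. F s (x s))"

text \<open>The shift max 0 (c0 - F_int x) keeps the integral of the right-hand side above c0; this
  keeps the L^p norm of its periodic solution away from 0, so that T below is well defined.\<close>

definition rhs :: "(real \<Rightarrow> real) \<Rightarrow> real \<Rightarrow> real" where
  "rhs x s = F s (x s) + max 0 (c0 - F_int x)"

definition T :: "(real \<Rightarrow> real) \<Rightarrow> real \<Rightarrow> real" where
  "T x t = rho * per_sol (rhs x) t / Lp_norm p (per_sol (rhs x))"

lemma F_int_nonneg: "continuous_on {0..1} x \<Longrightarrow> F_int x \<ge> 0"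
  unfolding F_int_def
  by (rule integral_nonneg) (auto intro: integrable_continuous_interval continuous_on_F_comp F_nonneg)

lemma continuous_on_rhs: "continuous_on {0..1} x \<Longrightarrow> continuous_on {0..1} (rhs x)"
  unfolding rhs_def by (intro continuous_intros continuous_on_F_comp)

lemma rhs_nonneg: "s \<in> {0..1} \<Longrightarrow> rhs x s \<ge> 0"
  unfolding rhs_def using F_nonneg by (simp add: add_nonneg_nonneg)

lemma rhs_le: "continuous_on {0..1} x \<Longrightarrow> s \<in> {0..1} \<Longrightarrow> rhs x s \<le> M + c0"
  unfolding rhs_def using F_le F_int_nonneg c0_pos by (smt (verit))

lemma integral_rhs_ge:
  assumes x: "continuous_on {0..1} x"
  shows "integral {0..1} (rhs x) \<ge> c0"
proof -
  have "integral {0..1} (rhs x) = F_int x + max 0 (c0 - F_int x)"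
    using Henstock_Kurzweil_Integration.integral_add[OF
        integrable_continuous_interval[OF continuous_on_F_comp[OF x]]
        integrable_const_ivl[of "max 0 (c0 - F_int x)" 0 1]]
    unfolding rhs_def[abs_def] F_int_def by simp
  then show ?thesis by simp
qed

lemma Lp_norm_per_sol_rhs_ge:
  assumes x: "continuous_on {0..1} x"
  shows "Lp_norm p (per_sol (rhs x)) \<ge> integral {0..1} (rhs x) / w\<^sup>2"
  using integral_le_Lp_norm[OF continuous_on_per_sol[OF continuous_on_rhs[OF x]] p]
  unfolding integral_per_sol[OF continuous_on_rhs[OF x]] .

lemma Lp_norm_per_sol_rhs_pos: "continuous_on {0..1} x \<Longrightarrow> Lp_norm p (per_sol (rhs x)) > 0"
  using Lp_norm_per_sol_rhs_ge integral_rhs_ge c0_pos w_pos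
  by (smt (verit, best) divide_pos_pos zero_less_power)

lemma abs_per_sol_rhs_le:
  assumes x: "continuous_on {0..1} x" and t: "t \<in> {0..1}"
  shows "rho * \<bar>per_sol (rhs x) t\<bar> \<le> Lp_norm p (per_sol (rhs x))"
proof -
  have "\<bar>per_sol (rhs x) t\<bar> \<le> \<bar>kappa\<bar> * integral {0..1} (rhs x)"
    using abs_per_sol_le[OF continuous_on_rhs[OF x] rhs_nonneg t] .
  also have "\<dots> \<le> \<bar>kappa\<bar> * w\<^sup>2 * Lp_norm p (per_sol (rhs x))"
    using Lp_norm_per_sol_rhs_ge[OF x] w_pos by (simp add: field_simps mult_left_mono)
  finally show ?thesis
    unfolding rho_def using kappa_nonzero w_pos by (simp add: field_simps)
qed

lemma abs_T_le_one:
  assumes x: "continuous_on {0..1} x" and t: "t \<in> {0..1}"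
  shows "\<bar>T x t\<bar> \<le> 1"
  using abs_per_sol_rhs_le[OF x t] Lp_norm_per_sol_rhs_pos[OF x] rho_pos
  unfolding T_def by (simp add: abs_mult divide_le_eq)

lemma T_lipschitz:
  assumes x: "continuous_on {0..1} x" and t: "t \<in> {0..1}" and t': "t' \<in> {0..1}"
  shows "\<bar>T x t - T x t'\<bar> \<le> w * \<bar>t - t'\<bar>"
proof -
  let ?N = "Lp_norm p (per_sol (rhs x))"
  have "\<bar>per_sol (rhs x) t - per_sol (rhs x) t'\<bar> \<le> \<bar>kappa\<bar> * w * integral {0..1} (rhs x) * \<bar>t - t'\<bar>"
    by (rule per_sol_lipschitz[OF continuous_on_rhs[OF x] rhs_nonneg t t'])
  also have "\<dots> \<le> \<bar>kappa\<bar> * w * (w\<^sup>2 * ?N) * \<bar>t - t'\<bar>"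
    using Lp_norm_per_sol_rhs_ge[OF x] w_pos
    by (intro mult_right_mono mult_left_mono) (auto simp: field_simps)
  also have "\<dots> = \<bar>kappa\<bar> * w\<^sup>2 * ?N * (w * \<bar>t - t'\<bar>)"
    by (simp add: algebra_simps)
  finally have "rho * \<bar>per_sol (rhs x) t - per_sol (rhs x) t'\<bar> \<le> ?N * (w * \<bar>t - t'\<bar>)"
    unfolding rho_def using kappa_nonzero w_pos by (simp add: field_simps)
  moreover have "T x t - T x t' = rho * (per_sol (rhs x) t - per_sol (rhs x) t') / ?N"
    unfolding T_def by (simp add: diff_divide_distrib right_diff_distrib)
  ultimately show ?thesis
    using Lp_norm_per_sol_rhs_pos[OF x] rho_pos by (simp add: abs_mult divide_le_eq mult.commute)
qed

lemma Lp_norm_T: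
  assumes x: "continuous_on {0..1} x"
  shows "Lp_norm p (T x) = rho"
  using Lp_norm_scale[of "rho / Lp_norm p (per_sol (rhs x))" p "per_sol (rhs x)"]
    Lp_norm_per_sol_rhs_pos[OF x] rho_pos p continuous_on_per_sol[OF continuous_on_rhs[OF x]]
  unfolding T_def by (simp add: field_simps)

lemma T_tendsto:
  assumes xk: "\<And>k. continuous_on {0..1} (xk k)" and x: "continuous_on {0..1} x"
    and lim: "\<And>s. s \<in> {0..1} \<Longrightarrow> (\<lambda>k. xk k s) \<longlonglongrightarrow> x s" and t: "t \<in> {0..1}"
  shows "(\<lambda>k. T (xk k) t) \<longlonglongrightarrow> T x t"
proof -
  have "(\<lambda>k. F_int (xk k)) \<longlonglongrightarrow> F_int x"
    unfolding F_int_def using F_nonneg F_le lim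
    by (intro tendsto_integral_bounded[where B=M] continuous_on_F_comp xk F_comp_tendsto) auto
  then have rhs_lim: "(\<lambda>k. rhs (xk k) s) \<longlonglongrightarrow> rhs x s" if "s \<in> {0..1}" for s
    unfolding rhs_def using lim that by (intro tendsto_intros F_comp_tendsto) auto
  have rhs_bound: "\<bar>rhs (xk k) s\<bar> \<le> M + c0" if "s \<in> {0..1}" for k s
    using rhs_nonneg rhs_le[OF xk that] that by simp
  have per_sol_bound: "\<bar>per_sol (rhs (xk k)) s\<bar> \<le> \<bar>kappa\<bar> * (M + c0)" if "s \<in> {0..1}" for k s
  proof -
    have "integral {0..1} (rhs (xk k)) \<le> integral {0..1} (\<lambda>s::real. M + c0)"
      by (rule Henstock_Kurzweil_Integration.integral_le[OF
            integrable_continuous_interval[OF continuous_on_rhs[OF xk]] integrable_const_ivl])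
        (use rhs_le[OF xk] in auto)
    then have "integral {0..1} (rhs (xk k)) \<le> M + c0" by simp
    then show ?thesis
      using abs_per_sol_le[OF continuous_on_rhs[OF xk] rhs_nonneg that, of k]
      by (meson abs_ge_zero mult_left_mono order_trans)
  qed
  have "(\<lambda>k. per_sol (rhs (xk k)) t) \<longlonglongrightarrow> per_sol (rhs x) t"
    by (rule per_sol_tendsto[OF continuous_on_rhs[OF xk] continuous_on_rhs[OF x] rhs_lim rhs_bound t])
  moreover have "(\<lambda>k. Lp_norm p (per_sol (rhs (xk k)))) \<longlonglongrightarrow> Lp_norm p (per_sol (rhs x))"
    using rhs_lim rhs_bound per_sol_bound
    by (intro Lp_norm_tendsto[where B="\<bar>kappa\<bar> * (M + c0)"] per_sol_tendsto continuous_on_per_sol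
        continuous_on_rhs xk x p) auto
  ultimately show ?thesis
    unfolding T_def using Lp_norm_per_sol_rhs_pos[OF x] by (intro tendsto_intros) auto
qed

lemma fixpoint_solves:
  assumes y: "continuous_on {0..1} y" and fixed: "\<And>t. t \<in> {0..1} \<Longrightarrow> T y t = y t"
    and F_int_ge: "F_int y \<ge> c0"
  shows "\<exists>lam>0. \<exists>x. is_periodic_bvp_solution w lam F x \<and> (\<forall>t\<in>{0..1}. x t = y t)"
proof -
  define h where "h = rhs y"
  have h: "continuous_on {0..1} h" unfolding h_def by (rule continuous_on_rhs[OF y])
  have h_eq: "h s = F s (y s)" for s
    unfolding h_def rhs_def using F_int_ge by simp
  define lam where "lam = rho / Lp_norm p (per_sol h)"
  have lam_pos: "lam > 0"
    unfolding lam_def h_def using rho_pos Lp_norm_per_sol_rhs_pos[OF y] by simp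
  define x where "x t = lam * per_sol h t" for t
  have xy: "x t = y t" if "t \<in> {0..1}" for t
    using fixed[OF that] unfolding x_def lam_def T_def h_def by simp
  have "is_periodic_bvp_solution w lam F x"
    unfolding is_periodic_bvp_solution_def
  proof (intro exI conjI ballI)
    fix t :: real assume t: "t \<in> {0..1}"
    show "(x has_real_derivative lam * per_sol_deriv h t) (at t within {0..1})"
      unfolding x_def[abs_def] by (rule DERIV_cmult[OF has_derivative_per_sol[OF h t]])
    show "((\<lambda>t. lam * per_sol_deriv h t) has_real_derivative lam * (h t - w\<^sup>2 * per_sol h t))
        (at t within {0..1})"
      by (rule DERIV_cmult[OF has_derivative_per_sol_deriv[OF h t]])
    show "lam * (h t - w\<^sup>2 * per_sol h t) + w\<^sup>2 * x t = lam * F t (x t)"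
      unfolding x_def[symmetric] using h_eq[of t] xy[OF t] by (simp add: x_def algebra_simps)
  next
    show "continuous_on {0..1} (\<lambda>t. lam * (h t - w\<^sup>2 * per_sol h t))"
      by (intro continuous_intros h continuous_on_per_sol[OF h])
  qed (use per_sol_periodic in \<open>simp_all add: x_def\<close>)
  then show ?thesis using lam_pos xy by blast
qed


lemma T_has_fixpoint: "\<exists>y. continuous_on {0..1} y \<and> (\<forall>t\<in>{0..1}. T y t = y t)"
proof (rule fixpoint_of_bounded_lipschitz_operator)
  show "\<bar>T x t\<bar> \<le> 1" if "continuous_on {0..1} x" "t \<in> {0..1}" for x t
    using abs_T_le_one that .
  show "\<bar>T x t - T x t'\<bar> \<le> w * \<bar>t - t'\<bar>"
    if "continuous_on {0..1} x" "t \<in> {0..1}" "t' \<in> {0..1}" for x t t'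
    using T_lipschitz that .
  show "(\<lambda>k. T (xk k) t) \<longlonglongrightarrow> T x t"
    if "\<And>k. continuous_on {0..1} (xk k)" "continuous_on {0..1} x"
      "\<And>s. s \<in> {0..1} \<Longrightarrow> (\<lambda>k. xk k s) \<longlonglongrightarrow> x s" "t \<in> {0..1}" for xk x t
    using T_tendsto that by blast
qed (use w_pos in simp)

lemma exists_normalised_solution:
  assumes lower: "\<forall>y t0. continuous_on {0..1} y \<and> (\<forall>t\<in>{0..1}. \<bar>y t\<bar> \<le> 1) \<and>
    (\<forall>t\<in>{0..1}. \<forall>t'\<in>{0..1}. \<bar>y t - y t'\<bar> \<le> w * \<bar>t - t'\<bar>) \<and>
    t0 \<in> {0..1} \<and> rho \<le> \<bar>y t0\<bar> \<longrightarrow> c0 \<le> F_int y"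
  shows "\<exists>lam>0. \<exists>x. is_periodic_bvp_solution w lam F x \<and> (\<forall>t\<in>{0..1}. \<bar>x t\<bar> \<le> 1) \<and>
    Lp_norm p x = rho"
proof -
  obtain y where y: "continuous_on {0..1} y" and y_fixed: "\<And>t. t \<in> {0..1} \<Longrightarrow> T y t = y t"
    using T_has_fixpoint by blast
  have y_le: "\<bar>y t\<bar> \<le> 1" if "t \<in> {0..1}" for t
    using abs_T_le_one[OF y that] y_fixed[OF that] by simp
  have y_norm: "Lp_norm p y = rho"
    using Lp_norm_T[OF y] Lp_norm_cong[of "T y" y] y_fixed by simp
  obtain t0 where "t0 \<in> {0..1}" "rho \<le> \<bar>y t0\<bar>"
    using exists_abs_ge_Lp_norm[OF y p] y_norm by metis
  moreover have "\<forall>t\<in>{0..1}. \<forall>t'\<in>{0..1}. \<bar>y t - y t'\<bar> \<le> w * \<bar>t - t'\<bar>"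
    using T_lipschitz[OF y] y_fixed by simp
  ultimately have "c0 \<le> F_int y"
    using lower y y_le by blast
  then obtain lam x where "lam > 0" "is_periodic_bvp_solution w lam F x" and xy: "\<forall>t\<in>{0..1}. x t = y t"
    using fixpoint_solves[OF y y_fixed] by blast
  moreover have "\<forall>t\<in>{0..1}. \<bar>x t\<bar> \<le> 1"
    using xy y_le by simp
  moreover have "Lp_norm p x = rho"
    using Lp_norm_cong[of x y p] xy y_norm by simp
  ultimately show ?thesis by blast
qed

end

lemma positive_min_on_annulus:
  fixes f :: "real \<Rightarrow> real \<Rightarrow> real"
  assumes cont: "continuous_on ({0..1} \<times> {-1..1}) (\<lambda>(t, u). f t u)"
    and pos: "\<And>t u. t \<in> {0..1} \<Longrightarrow> a \<le> \<bar>u\<bar> \<Longrightarrow> \<bar>u\<bar> \<le> 1 \<Longrightarrow> f t u > 0"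
    and a: "0 \<le> a" "a \<le> 1"
  obtains m where "m > 0" "\<And>t u. t \<in> {0..1} \<Longrightarrow> a \<le> \<bar>u\<bar> \<Longrightarrow> \<bar>u\<bar> \<le> 1 \<Longrightarrow> f t u \<ge> m"
proof -
  define K where "K = {0..1::real} \<times> ({-1..-a} \<union> {a..1})"
  have K_iff: "(t, u) \<in> K \<longleftrightarrow> t \<in> {0..1} \<and> a \<le> \<bar>u\<bar> \<and> \<bar>u\<bar> \<le> 1" for t u
    using a unfolding K_def by (cases "u \<ge> 0") auto
  have "compact K"
    unfolding K_def by (intro compact_Times compact_Un compact_Icc)
  moreover have "K \<noteq> {}" using a K_iff[of 0 1] by auto
  moreover have "continuous_on K (\<lambda>(t, u). f t u)"
  proof (rule continuous_on_subset[OF cont])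
    have "{-1..-a} \<union> {a..1} \<subseteq> {-1..(1::real)}" using a by (intro Un_least) auto
    then show "K \<subseteq> {0..1} \<times> {-1..1}" unfolding K_def by (rule Sigma_mono[OF order_refl])
  qed
  ultimately obtain z where z: "z \<in> K" and min: "\<forall>z'\<in>K. (\<lambda>(t, u). f t u) z \<le> (\<lambda>(t, u). f t u) z'"
    by (metis continuous_attains_inf)
  show thesis
  proof (rule that)
    show "(\<lambda>(t, u). f t u) z > 0" using z pos by (cases z) (simp add: K_iff)
    show "(\<lambda>(t, u). f t u) z \<le> f t u" if "t \<in> {0..1}" "a \<le> \<bar>u\<bar>" "\<bar>u\<bar> \<le> 1" for t u
      using min[rule_format, of "(t, u)"] that by (simp add: K_iff)
  qed
qed

text \<open>A function that is L-Lipschitz, bounded by 1 and reaches modulus a somewhere stays in the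
  region where f is at least half its minimum m on a whole interval of a length d depending
  only on L and the modulus of uniform continuity of f.\<close>

lemma integral_comp_lower_bound:
  fixes f :: "real \<Rightarrow> real \<Rightarrow> real"
  assumes cont: "continuous_on ({0..1} \<times> {-1..1}) (\<lambda>(t, u). f t u)"
    and nonneg: "\<And>t u. t \<in> {0..1} \<Longrightarrow> \<bar>u\<bar> \<le> 1 \<Longrightarrow> f t u \<ge> 0"
    and pos: "\<And>t u. t \<in> {0..1} \<Longrightarrow> a \<le> \<bar>u\<bar> \<Longrightarrow> \<bar>u\<bar> \<le> 1 \<Longrightarrow> f t u > 0"
    and a: "0 \<le> a" "a \<le> 1" and L: "L \<ge> 0"
  obtains c where "c > 0"
    "\<forall>y t0. continuous_on {0..1} y \<and> (\<forall>t\<in>{0..1}. \<bar>y t\<bar> \<le> 1) \<and>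
      (\<forall>t\<in>{0..1}. \<forall>t'\<in>{0..1}. \<bar>y t - y t'\<bar> \<le> L * \<bar>t - t'\<bar>) \<and>
      t0 \<in> {0..1} \<and> a \<le> \<bar>y t0\<bar> \<longrightarrow> c \<le> integral {0..1} (\<lambda>s. f s (y s))"
proof -
  define K where "K = {0..1::real} \<times> {-1..1::real}"
  obtain m where m: "m > 0" and m_le: "\<And>t u. t \<in> {0..1} \<Longrightarrow> a \<le> \<bar>u\<bar> \<Longrightarrow> \<bar>u\<bar> \<le> 1 \<Longrightarrow> f t u \<ge> m"
    using positive_min_on_annulus[OF cont pos a] by blast
  obtain d0 where d0: "d0 > 0" and unif: "\<And>z z'. z \<in> K \<Longrightarrow> z' \<in> K \<Longrightarrow> dist z' z < d0 \<Longrightarrow>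
      dist ((\<lambda>(t, u). f t u) z') ((\<lambda>(t, u). f t u) z) < m / 2"
    using compact_uniformly_continuous[OF cont] m unfolding uniformly_continuous_on_def K_def
    by (metis compact_Icc compact_Times half_gt_zero)
  define d where "d = min (1/2) (d0 / (2 * (L + 1)))"
  have d_le: "d \<le> 1/2" "d \<le> d0 / (2 * (L + 1))"
    unfolding d_def by (rule min.cobounded1, rule min.cobounded2)
  have "d * (L + 1) \<le> d0 / 2" using d_le(2) L by (simp add: field_simps)
  then have d: "0 < d" "d \<le> 1/2" "d * (L + 1) < d0"
    using d0 L d_le(1) unfolding d_def by auto
  show thesis
  proof (rule that[of "m / 2 * d"]; (intro allI impI)?; (elim conjE)?)
    show "m / 2 * d > 0" using m d by simp
    fix y t0 assume y: "continuous_on {0..1} y" and y_bound: "\<forall>t\<in>{0..1}. \<bar>y t\<bar> \<le> 1"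
      and y_lipschitz: "\<forall>t\<in>{0..1}. \<forall>t'\<in>{0..1}. \<bar>y t - y t'\<bar> \<le> L * \<bar>t - t'\<bar>"
      and t0: "t0 \<in> {0..1}" and y_t0: "a \<le> \<bar>y t0\<bar>"
    have y_le: "\<bar>y t\<bar> \<le> 1" if "t \<in> {0..1}" for t using y_bound that by blast
    have y_lip: "\<bar>y t - y t'\<bar> \<le> L * \<bar>t - t'\<bar>" if "t \<in> {0..1}" "t' \<in> {0..1}" for t t'
      using y_lipschitz that by blast
    have near: "f s (y s) \<ge> m / 2" if s: "s \<in> {0..1}" "\<bar>s - t0\<bar> \<le> d" for s
    proof -
      have "dist (s, y s) (t0, y t0) \<le> dist s t0 + dist (y s) (y t0)"
        unfolding dist_Pair_Pair using sqrt_sum_squares_le_sum_abs[of "dist s t0" "dist (y s) (y t0)"]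
        by simp
      also have "\<dots> \<le> d + L * d"
        using s y_lip[OF s(1) t0] L by (simp add: dist_real_def) (meson add_mono mult_left_mono order_trans)
      also have "\<dots> < d0" using d by (simp add: algebra_simps)
      finally have "\<bar>f s (y s) - f t0 (y t0)\<bar> < m / 2"
        using unif[of "(t0, y t0)" "(s, y s)"] s t0 y_le unfolding K_def
        by (auto simp: dist_real_def abs_le_iff)
      then show ?thesis using m_le[OF t0 y_t0 y_le[OF t0]] by linarith
    qed
    have "continuous_on {0..1} (\<lambda>s. (\<lambda>(t, u). f t u) (s, y s))"
      by (rule continuous_on_compose2[OF cont])
        (use y y_le in \<open>auto intro!: continuous_intros simp: abs_le_iff\<close>)
    then have fy: "continuous_on {0..1} (\<lambda>s. f s (y s))" by simp
    have fy_nonneg: "f s (y s) \<ge> 0" if "s \<in> {0..1}" for s using nonneg that y_le by blast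
    show "integral {0..1} (\<lambda>s. f s (y s)) \<ge> m / 2 * d"
      using integral_ge_near_point[OF fy fy_nonneg t0 less_imp_le[OF d(1)] d(2) near] .
  qed
qed

lemma sin_half_nonzero_if_nonresonant:
  fixes w :: real
  assumes w_pos: "w > 0" and nonres: "\<forall>n::nat. n \<ge> 1 \<longrightarrow> w \<noteq> 2 * real n * pi"
  shows "sin (w / 2) \<noteq> 0"
proof
  assume "sin (w / 2) = 0"
  then obtain i :: int where i: "w / 2 = of_int i * pi" using sin_zero_iff_int2 by blast
  then have "of_int i * pi > 0" using w_pos by linarith
  then have "i > 0" by (simp add: zero_less_mult_iff)
  then have "w = 2 * real (nat i) * pi" "nat i \<ge> 1" using i by simp_all
  then show False using nonres by blast
qed

lemma two_div_abs_sin_half_le_one: "(w::real) > 0 \<Longrightarrow> 2 / w * \<bar>sin (w / 2)\<bar> \<le> 1"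
  using abs_sin_x_le_abs_x[of "w / 2"] by (simp add: field_simps)

lemma is_periodic_bvp_solution_cong:
  assumes "\<And>t. t \<in> {0..1} \<Longrightarrow> f t (x t) = g t (x t)"
  shows "is_periodic_bvp_solution w lam f x \<longleftrightarrow> is_periodic_bvp_solution w lam g x"
  using assms unfolding is_periodic_bvp_solution_def by simp

text \<open>Truncating the second argument of f to [-1, 1] gives a bounded continuous nonlinearity on
  [0,1] \<times> UNIV; the fixed point found below takes values in [-1, 1], where the truncation is
  invisible.\<close>

definition clip :: "real \<Rightarrow> real" where
  "clip u = max (-1) (min 1 u)"

lemma abs_clip_le: "\<bar>clip u\<bar> \<le> 1"
  unfolding clip_def by auto

lemma clip_id: "\<bar>u\<bar> \<le> 1 \<Longrightarrow> clip u = u"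
  unfolding clip_def by auto

lemma continuous_on_clip_comp:
  fixes f :: "real \<Rightarrow> real \<Rightarrow> real"
  assumes "continuous_on ({0..1} \<times> {-1..1}) (\<lambda>(t, u). f t u)"
  shows "continuous_on ({0..1} \<times> UNIV) (\<lambda>(t, u). f t (clip u))"
proof -
  have "continuous_on ({0..1} \<times> UNIV) (\<lambda>z. (\<lambda>(t, u). f t u) (fst z, clip (snd z)))"
    by (rule continuous_on_compose2[OF assms]) (auto intro!: continuous_intros simp: clip_def)
  then show ?thesis by (simp add: case_prod_beta')
qed

lemma bounded_above_clip_comp:
  fixes f :: "real \<Rightarrow> real \<Rightarrow> real"
  assumes "continuous_on ({0..1} \<times> {-1..1}) (\<lambda>(t, u). f t u)"
  obtains M where "\<And>t u. t \<in> {0..1} \<Longrightarrow> f t (clip u) \<le> M"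
proof -
  obtain M where M: "\<And>z. z \<in> {0..1} \<times> {-1..1} \<Longrightarrow> \<bar>(\<lambda>(t, u). f t u) z\<bar> \<le> M"
    using compact_imp_bounded[OF compact_continuous_image[OF assms]]
    unfolding bounded_iff by (force intro: compact_Times)
  have "f t (clip u) \<le> M" if "t \<in> {0..1}" for t u
    using M[of "(t, clip u)"] that abs_clip_le[of u] by (auto simp: abs_le_iff)
  then show thesis using that by blast
qed

lemma (in nonresonant) exists_normalised_solution_bounded:
  assumes cont: "continuous_on ({0..1} \<times> UNIV) (\<lambda>(t, u). g t u)"
    and nonneg: "\<And>t u. t \<in> {0..1} \<Longrightarrow> g t u \<ge> 0"
    and bounded: "\<And>t u. t \<in> {0..1} \<Longrightarrow> g t u \<le> M"
    and pos: "\<And>t u. t \<in> {0..1} \<Longrightarrow> rho \<le> \<bar>u\<bar> \<Longrightarrow> \<bar>u\<bar> \<le> 1 \<Longrightarrow> g t u > 0"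
    and p: "p \<ge> 1"
  shows "\<exists>lam>0. \<exists>x. is_periodic_bvp_solution w lam g x \<and> (\<forall>t\<in>{0..1}. \<bar>x t\<bar> \<le> 1) \<and>
    Lp_norm p x = rho"
proof -
  obtain c0 where c0: "c0 > 0" and c0_le: "\<forall>y t0. continuous_on {0..1} y \<and>
      (\<forall>t\<in>{0..1}. \<bar>y t\<bar> \<le> 1) \<and> (\<forall>t\<in>{0..1}. \<forall>t'\<in>{0..1}. \<bar>y t - y t'\<bar> \<le> w * \<bar>t - t'\<bar>) \<and>
      t0 \<in> {0..1} \<and> rho \<le> \<bar>y t0\<bar> \<longrightarrow> c0 \<le> integral {0..1} (\<lambda>s. g s (y s))"
  proof (rule integral_comp_lower_bound[where f = g and a = rho and L = w])
    show "continuous_on ({0..1} \<times> {-1..1}) (\<lambda>(t, u). g t u)"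
      by (rule continuous_on_subset[OF cont]) auto
    show "g t u \<ge> 0" if "t \<in> {0..1}" "\<bar>u\<bar> \<le> 1" for t u
      using nonneg that(1) .
    show "g t u > 0" if "t \<in> {0..1}" "rho \<le> \<bar>u\<bar>" "\<bar>u\<bar> \<le> 1" for t u
      using pos that .
    show "0 \<le> rho" "rho \<le> 1"
      using rho_pos two_div_abs_sin_half_le_one[OF w_pos] by (simp_all add: rho_eq)
    show "0 \<le> w" using w_pos by simp
  qed (rule that)
  interpret periodic_bvp_operator w g M c0 p
    by unfold_locales (fact w_pos sin_half_nonzero cont nonneg bounded c0 p)+
  show ?thesis
    using exists_normalised_solution[unfolded F_int_def, OF c0_le] .
qed

theorem theorem3p5:
  fixes w r p :: real and f :: "real \<Rightarrow> real \<Rightarrow> real"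
  assumes w_pos: "w > 0"
    and w_nonres: "\<forall>n::nat. n \<ge> 1 \<longrightarrow> w \<noteq> 2 * real n * pi"
    and r: "r \<ge> 1"
    and f_cont: "continuous_on ({0..1} \<times> {-r..r}) (\<lambda>(t, u). f t u)"
    and f_nonneg: "\<forall>t\<in>{0..1}. \<forall>u\<in>{-r..r}. f t u \<ge> 0"
    and f_pos: "\<forall>t\<in>{0..1}. \<forall>u. 2 / w * \<bar>sin (w / 2)\<bar> \<le> \<bar>u\<bar> \<and> \<bar>u\<bar> \<le> r \<longrightarrow> f t u > 0"
    and p: "p \<ge> 1"
  shows "\<exists>lam > 0. \<exists>x. is_periodic_bvp_solution w lam f x \<and>
           (\<forall>t\<in>{0..1}. x t \<in> {-r..r}) \<and>
           (integral {0..1} (\<lambda>t. \<bar>x t\<bar> powr p)) powr (1 / p) = 2 / w * \<bar>sin (w / 2)\<bar>"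
proof -
  interpret nonresonant w
    using w_pos sin_half_nonzero_if_nonresonant[OF w_pos w_nonres] by unfold_locales
  have f_cont1: "continuous_on ({0..1} \<times> {-1..1}) (\<lambda>(t, u). f t u)"
    by (rule continuous_on_subset[OF f_cont]) (use r in auto)
  define g where "g t u = f t (clip u)" for t u
  obtain M where "\<And>t u. t \<in> {0..1} \<Longrightarrow> g t u \<le> M"
    using bounded_above_clip_comp[OF f_cont1] unfolding g_def by blast
  moreover have "continuous_on ({0..1} \<times> UNIV) (\<lambda>(t, u). g t u)"
    unfolding g_def by (rule continuous_on_clip_comp[OF f_cont1])
  moreover have "g t u \<ge> 0" if "t \<in> {0..1}" for t u
    using f_nonneg that abs_clip_le[of u] r unfolding g_def by (auto simp: abs_le_iff)
  moreover have "g t u > 0" if "t \<in> {0..1}" "rho \<le> \<bar>u\<bar>" "\<bar>u\<bar> \<le> 1" for t u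
    using f_pos that r unfolding g_def rho_eq by (simp add: clip_id)
  ultimately obtain lam x where "lam > 0" and sol: "is_periodic_bvp_solution w lam g x"
    and x_le: "\<forall>t\<in>{0..1}. \<bar>x t\<bar> \<le> 1" and "Lp_norm p x = rho"
    using exists_normalised_solution_bounded[of g M p] p by blast
  moreover have "is_periodic_bvp_solution w lam f x"
    using sol x_le is_periodic_bvp_solution_cong[of g x f] by (simp add: g_def clip_id)
  moreover have "\<forall>t\<in>{0..1}. x t \<in> {-r..r}"
    using x_le r by (force simp: abs_le_iff)
  ultimately show ?thesis unfolding Lp_norm_def rho_eq by blast
qed

end
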